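(* Let $J^r:\mathbb{R}^n\to\mathbb{R}^k$ be continuously differentiable, let $\epsilon\in[0,\infty)^k$, and let $$P_2^r:=\Big\{u\in\mathbb{R}^n:\min_{\alpha\in\Delta_k}\big(\|DJ^r(u)^\top\alpha\|_2^2-(\alpha^\top\epsilon)^2\big)\le 0\Big\}.$$ Then for every $\tilde u\in P_2^r$ there exists a continuously differentiable $\tilde J:\mathbb{R}^n\to\mathbb{R}^k$ with $$\sup_{u\in\mathbb{R}^n}\|\nabla\tilde J_i(u)-\nabla J^r_i(u)\|_2\le\epsilon_i\quad\text{for all } i\in\{1,\dots,k\}$$ such that $\tilde u$ is Pareto critical for $\tilde J$.
   Context: $\Delta_k:=\{\alpha\in[0,\infty)^k:\sum_{i=1}^k\alpha_i=1\}$. $DJ(u)\in\mathbb{R}^{k\times n}$ denotes the Jacobian, so $DJ(u)^\top\alpha=\sum_i\alpha_i\nabla J_i(u)$. A point $\tilde u$ is Pareto critical for $\tilde J$ if there is $\alpha\in\Delta_k$ with $D\tilde J(\tilde u)^\top\alpha=0$. *)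

theory Defs
  imports "HOL-Analysis.Analysis"
begin

definition prob_simplex :: "(real ^ 'k::finite) set" where
  "prob_simplex = {\<alpha>. (\<forall>i. 0 \<le> \<alpha> $ i) \<and> (\<Sum>i\<in>UNIV. \<alpha> $ i) = 1}"

definition C1_with_grads :: "(real ^ 'n::finite \<Rightarrow> real ^ 'k::finite) \<Rightarrow> ('k \<Rightarrow> real ^ 'n \<Rightarrow> real ^ 'n) \<Rightarrow> bool" where
  "C1_with_grads J G \<longleftrightarrow>
     (\<forall>i u. ((\<lambda>v. J v $ i) has_derivative (\<lambda>h. G i u \<bullet> h)) (at u)) \<and>
     (\<forall>i. continuous_on UNIV (G i))"

definition jacT_mult :: "('k::finite \<Rightarrow> real ^ 'n::finite \<Rightarrow> real ^ 'n) \<Rightarrow> real ^ 'n \<Rightarrow> real ^ 'k \<Rightarrow> real ^ 'n" where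
  "jacT_mult G u \<alpha> = (\<Sum>i\<in>UNIV. \<alpha> $ i *\<^sub>R G i u)"

definition pareto_critical :: "('k::finite \<Rightarrow> real ^ 'n::finite \<Rightarrow> real ^ 'n) \<Rightarrow> real ^ 'n \<Rightarrow> bool" where
  "pareto_critical G u \<longleftrightarrow> (\<exists>\<alpha>\<in>prob_simplex. jacT_mult G u \<alpha> = 0)"

definition P2r :: "('k::finite \<Rightarrow> real ^ 'n::finite \<Rightarrow> real ^ 'n) \<Rightarrow> real ^ 'k \<Rightarrow> (real ^ 'n) set" where
  "P2r G \<epsilon> = {u. (INF \<alpha>\<in>prob_simplex. (norm (jacT_mult G u \<alpha>))\<^sup>2 - (\<alpha> \<bullet> \<epsilon>)\<^sup>2) \<le> 0}"

end

theory Submission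
  imports Defs
begin

text \<open>The infimum defining \<open>P2r\<close> is attained on the compact simplex, so a point of
  \<open>P2r\<close> comes with weights \<open>\<alpha>\<close> for which \<open>v = DJ(u)\<^sup>T \<alpha>\<close> satisfies \<open>\<parallel>v\<parallel> \<le> \<alpha> \<bullet> \<epsilon>\<close>.
  Subtracting from each \<open>J\<^sub>i\<close> the linear function \<open>u \<mapsto> (\<epsilon>\<^sub>i / (\<alpha> \<bullet> \<epsilon>)) v \<bullet> u\<close> moves every
  gradient by at most \<open>\<epsilon>\<^sub>i\<close> and shifts \<open>DJ(u)\<^sup>T \<alpha>\<close> by exactly \<open>-v\<close>, making it vanish.\<close>

lemma closed_prob_simplex: "closed (prob_simplex :: (real ^ 'k::finite) set)"
proof -
  have "prob_simplex = (\<Inter>i. {\<alpha>::real^'k. 0 \<le> \<alpha> $ i}) \<inter> {\<alpha>. (\<Sum>i\<in>UNIV. \<alpha> $ i) = 1}"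
    unfolding prob_simplex_def by auto
  moreover have "closed {\<alpha>::real^'k. (\<Sum>i\<in>UNIV. \<alpha> $ i) = 1}"
    by (intro closed_Collect_eq continuous_intros)
  moreover have "closed {\<alpha>::real^'k. 0 \<le> \<alpha> $ i}" for i
    by (intro closed_Collect_le continuous_intros)
  ultimately show ?thesis by (metis closed_INT closed_Int)
qed

lemma bounded_prob_simplex: "bounded (prob_simplex :: (real ^ 'k::finite) set)"
  unfolding bounded_iff
proof (intro exI ballI)
  fix x :: "real^'k"
  assume "x \<in> prob_simplex"
  then have "(\<Sum>i\<in>UNIV. \<bar>x $ i\<bar>) = 1" unfolding prob_simplex_def by auto
  then show "norm x \<le> 1" using norm_le_l1_cart[of x] by simp
qed

lemma compact_prob_simplex: "compact (prob_simplex :: (real ^ 'k::finite) set)"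
  by (simp add: compact_eq_bounded_closed closed_prob_simplex bounded_prob_simplex)

lemma prob_simplex_nonempty: "(prob_simplex :: (real ^ 'k::finite) set) \<noteq> {}"
proof -
  have "(\<chi> i. 1 / real CARD('k)) \<in> (prob_simplex :: (real ^ 'k) set)"
    unfolding prob_simplex_def by simp
  then show ?thesis by blast
qed

lemma inner_prob_simplex_nonneg:
  assumes "\<alpha> \<in> prob_simplex" and "\<forall>i. 0 \<le> \<epsilon> $ i"
  shows "0 \<le> \<alpha> \<bullet> \<epsilon>"
  using assms unfolding prob_simplex_def inner_vec_def by (auto intro: sum_nonneg)

lemma continuous_on_attains_INF_prob_simplex:
  fixes f :: "real ^ 'k::finite \<Rightarrow> real"
  assumes "continuous_on prob_simplex f"
  obtains \<alpha> where "\<alpha> \<in> prob_simplex" and "f \<alpha> = (INF \<beta>\<in>prob_simplex. f \<beta>)"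
proof -
  obtain \<alpha> where \<alpha>: "\<alpha> \<in> prob_simplex" and min: "\<forall>\<beta>\<in>prob_simplex. f \<alpha> \<le> f \<beta>"
    using continuous_attains_inf[OF compact_prob_simplex prob_simplex_nonempty assms] by blast
  have "(INF \<beta>\<in>prob_simplex. f \<beta>) = f \<alpha>"
    using \<alpha> min by (intro antisym cINF_lower cINF_greatest)
      (auto intro: bdd_belowI2 simp: prob_simplex_nonempty)
  with \<alpha> that show ?thesis by simp
qed

lemma P2r_obtains_weights:
  assumes "u \<in> P2r G \<epsilon>" and "\<forall>i. 0 \<le> \<epsilon> $ i"
  obtains \<alpha> where "\<alpha> \<in> prob_simplex" and "norm (jacT_mult G u \<alpha>) \<le> \<alpha> \<bullet> \<epsilon>"
proof -
  define f where "f \<alpha> = (norm (jacT_mult G u \<alpha>))\<^sup>2 - (\<alpha> \<bullet> \<epsilon>)\<^sup>2" for \<alpha>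
  have "continuous_on prob_simplex f"
    unfolding f_def jacT_mult_def by (intro continuous_intros)
  then obtain \<alpha> where \<alpha>: "\<alpha> \<in> prob_simplex" and "f \<alpha> = (INF \<beta>\<in>prob_simplex. f \<beta>)"
    by (rule continuous_on_attains_INF_prob_simplex)
  with assms(1) have "(norm (jacT_mult G u \<alpha>))\<^sup>2 \<le> (\<alpha> \<bullet> \<epsilon>)\<^sup>2"
    unfolding P2r_def f_def by simp
  with inner_prob_simplex_nonneg[OF \<alpha> assms(2)]
  have "norm (jacT_mult G u \<alpha>) \<le> \<alpha> \<bullet> \<epsilon>"
    by (meson power2_le_imp_le)
  with \<alpha> that show ?thesis by blast
qed

lemma C1_with_grads_diff_linear:
  assumes "C1_with_grads J G"
  shows "C1_with_grads (\<lambda>u. \<chi> i. J u $ i - d i \<bullet> u) (\<lambda>i u. G i u - d i)"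
  unfolding C1_with_grads_def
proof (intro conjI allI)
  fix i u
  have "((\<lambda>v. J v $ i) has_derivative (\<lambda>h. G i u \<bullet> h)) (at u)"
    using assms unfolding C1_with_grads_def by blast
  then have "((\<lambda>v. J v $ i - d i \<bullet> v) has_derivative (\<lambda>h. G i u \<bullet> h - d i \<bullet> h)) (at u)"
    by (intro derivative_intros)
  then show "((\<lambda>v. (\<chi> i. J v $ i - d i \<bullet> v) $ i) has_derivative (\<lambda>h. (G i u - d i) \<bullet> h)) (at u)"
    by (simp add: inner_diff_left)
next
  fix i
  have "continuous_on UNIV (G i)"
    using assms unfolding C1_with_grads_def by blast
  then show "continuous_on UNIV (\<lambda>u. G i u - d i)" by (intro continuous_intros)
qed

lemma jacT_mult_diff_const:
  "jacT_mult (\<lambda>i u. G i u - d i) u \<alpha> = jacT_mult G u \<alpha> - (\<Sum>i\<in>UNIV. \<alpha> $ i *\<^sub>R d i)"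
  unfolding jacT_mult_def by (simp add: scaleR_diff_right sum_subtractf)

text \<open>When \<open>\<alpha> \<bullet> \<epsilon> = 0\<close> the hypothesis forces \<open>v = 0\<close>, and division by zero makes
  every \<open>d i\<close> zero as well, so no case split is needed in the definition.\<close>

lemma weighted_split_bounded:
  fixes v :: "'a::real_normed_vector"
  assumes "\<alpha> \<in> prob_simplex" and "\<forall>i. 0 \<le> \<epsilon> $ i" and "norm v \<le> \<alpha> \<bullet> \<epsilon>"
  defines "d \<equiv> \<lambda>i. (\<epsilon> $ i / (\<alpha> \<bullet> \<epsilon>)) *\<^sub>R v"
  shows "norm (d i) \<le> \<epsilon> $ i" and "(\<Sum>i\<in>UNIV. \<alpha> $ i *\<^sub>R d i) = v"
proof -
  have nonneg: "0 \<le> \<alpha> \<bullet> \<epsilon>" using inner_prob_simplex_nonneg[OF assms(1,2)] .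
  show "norm (d i) \<le> \<epsilon> $ i"
  proof (cases "\<alpha> \<bullet> \<epsilon> = 0")
    case False
    have "norm (d i) = \<epsilon> $ i * (norm v / (\<alpha> \<bullet> \<epsilon>))"
      unfolding d_def using assms(2) nonneg by (simp add: abs_mult)
    also have "\<dots> \<le> \<epsilon> $ i * 1"
      using False nonneg assms(2,3) by (intro mult_left_mono) auto
    finally show ?thesis by simp
  qed (use assms(2) d_def in simp)
  have "(\<Sum>i\<in>UNIV. \<alpha> $ i *\<^sub>R d i) = ((\<alpha> \<bullet> \<epsilon>) / (\<alpha> \<bullet> \<epsilon>)) *\<^sub>R v"
    unfolding d_def inner_vec_def
    by (simp add: scaleR_sum_left[symmetric] sum_divide_distrib[symmetric])
  also have "\<dots> = v"
    using assms(3) by (cases "\<alpha> \<bullet> \<epsilon> = 0") auto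
  finally show "(\<Sum>i\<in>UNIV. \<alpha> $ i *\<^sub>R d i) = v" .
qed

theorem mainTheorem3:
  fixes Jr :: "real ^ 'n::finite \<Rightarrow> real ^ 'k::finite"
    and Gr :: "'k \<Rightarrow> real ^ 'n \<Rightarrow> real ^ 'n"
    and \<epsilon> :: "real ^ 'k"
    and ut :: "real ^ 'n"
  assumes "C1_with_grads Jr Gr"
    and "\<forall>i. 0 \<le> \<epsilon> $ i"
    and "ut \<in> P2r Gr \<epsilon>"
  shows "\<exists>(Jt :: real ^ 'n \<Rightarrow> real ^ 'k) (Gt :: 'k \<Rightarrow> real ^ 'n \<Rightarrow> real ^ 'n).
           C1_with_grads Jt Gt \<and>
           (\<forall>i u. norm (Gt i u - Gr i u) \<le> \<epsilon> $ i) \<and>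
           pareto_critical Gt ut"
proof -
  obtain \<alpha> where \<alpha>: "\<alpha> \<in> prob_simplex" and v: "norm (jacT_mult Gr ut \<alpha>) \<le> \<alpha> \<bullet> \<epsilon>"
    using P2r_obtains_weights[OF assms(3,2)] .
  define d where "d i = (\<epsilon> $ i / (\<alpha> \<bullet> \<epsilon>)) *\<^sub>R jacT_mult Gr ut \<alpha>" for i
  note split = weighted_split_bounded[OF \<alpha> assms(2) v, folded d_def]
  define Gt where "Gt i u = Gr i u - d i" for i u
  have "C1_with_grads (\<lambda>u. \<chi> i. Jr u $ i - d i \<bullet> u) Gt"
    unfolding Gt_def by (rule C1_with_grads_diff_linear[OF assms(1)])
  moreover have "norm (Gt i u - Gr i u) \<le> \<epsilon> $ i" for i u
    unfolding Gt_def using split(1)[of i] by simp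
  moreover have "jacT_mult Gt ut \<alpha> = 0"
    unfolding Gt_def jacT_mult_diff_const split(2) by simp
  then have "pareto_critical Gt ut"
    unfolding pareto_critical_def using \<alpha> by blast
  ultimately show ?thesis by blast
qed

end
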